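(* If $Y$ is a finite connected simple undirected graph on $n$ vertices, then $\kappa(Y)\leq\tfrac1n\,\alpha(Y)$.
   Context: $\alpha(Y)$ is the number of acyclic orientations of $Y$. A click at a vertex $x$ that is a source of an orientation reverses all edges incident to $x$, making $x$ a sink. Two acyclic orientations are $\kappa$-equivalent if one can be transformed into the other by a finite sequence of clicks; $\kappa(Y)$ is the number of $\kappa$-equivalence classes. *)

theory Defs
  imports Complex_Main
begin

definition simple_graph :: "'a set \<Rightarrow> 'a set set \<Rightarrow> bool" where
  "simple_graph V E \<longleftrightarrow> finite V \<and>
     (\<forall>e\<in>E. \<exists>u v. u \<in> V \<and> v \<in> V \<and> u \<noteq> v \<and> e = {u, v})"

definition connected_graph :: "'a set \<Rightarrow> 'a set set \<Rightarrow> bool" where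
  "connected_graph V E \<longleftrightarrow> V \<noteq> {} \<and>
     (\<forall>u\<in>V. \<forall>v\<in>V. (u, v) \<in> {(a, b). {a, b} \<in> E}\<^sup>*)"

definition orientation :: "'a set \<Rightarrow> 'a set set \<Rightarrow> ('a \<times> 'a) set \<Rightarrow> bool" where
  "orientation V E R \<longleftrightarrow> (\<forall>(a, b)\<in>R. {a, b} \<in> E) \<and>
     (\<forall>a b. {a, b} \<in> E \<longrightarrow> ((a, b) \<in> R \<longleftrightarrow> (b, a) \<notin> R))"

definition acyclic_orientations :: "'a set \<Rightarrow> 'a set set \<Rightarrow> ('a \<times> 'a) set set" where
  "acyclic_orientations V E = {R. orientation V E R \<and> acyclic R}"

definition alpha :: "'a set \<Rightarrow> 'a set set \<Rightarrow> nat" where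
  "alpha V E = card (acyclic_orientations V E)"

definition is_source :: "('a \<times> 'a) set \<Rightarrow> 'a \<Rightarrow> bool" where
  "is_source R x \<longleftrightarrow> (\<forall>y. (y, x) \<notin> R)"

definition click :: "('a \<times> 'a) set \<Rightarrow> 'a \<Rightarrow> ('a \<times> 'a) set" where
  "click R x = {(a, b) \<in> R. a \<noteq> x \<and> b \<noteq> x} \<union> {(b, a) | a b. (a, b) \<in> R \<and> (a = x \<or> b = x)}"

definition click_step :: "'a set \<Rightarrow> 'a set set \<Rightarrow> (('a \<times> 'a) set \<times> ('a \<times> 'a) set) set" where
  "click_step V E = {(R, R'). R \<in> acyclic_orientations V E \<and>
       (\<exists>x\<in>V. is_source R x \<and> R' = click R x)}"

definition kappa_equiv :: "'a set \<Rightarrow> 'a set set \<Rightarrow> (('a \<times> 'a) set \<times> ('a \<times> 'a) set) set" where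
  "kappa_equiv V E = (click_step V E \<union> (click_step V E)\<inverse>)\<^sup>*"

definition kappa :: "'a set \<Rightarrow> 'a set set \<Rightarrow> nat" where
  "kappa V E = card (acyclic_orientations V E // kappa_equiv V E)"

end

theory Submission
  imports Defs
begin

text \<open>Clicking the vertices of a down-closed set \<open>S\<close> of an acyclic orientation \<open>R\<close> one at a
  time, in a topological order, reverses exactly the arcs of \<open>R\<close> between \<open>S\<close> and its complement.
  So every such cut flip of \<open>R\<close> is \<open>\<kappa>\<close>-equivalent to \<open>R\<close>. The prefixes of length
  \<open>0, \<dots>, n - 1\<close> of a linear extension of \<open>R\<close> are nested down-closed proper subsets of \<open>V\<close>,
  and since the graph is connected some edge crosses the difference of any two of them, so their
  cut flips are pairwise distinct. Thus every \<open>\<kappa>\<close>-class has at least \<open>n\<close> elements, and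
  \<open>n \<kappa>(Y) \<le> \<alpha>(Y)\<close> follows by counting the partition into classes.\<close>

lemma acyclic_Un_into_sink:
  assumes "acyclic A" "Range B \<subseteq> {x}" "x \<notin> Domain (A \<union> B)"
  shows "acyclic (A \<union> B)"
proof -
  have avoid_sink: "b = x \<or> (a, b) \<in> A\<^sup>+" if "(a, b) \<in> (A \<union> B)\<^sup>+" "a \<noteq> x" for a b
    using that assms(2,3) by (induction rule: trancl_induct) (auto intro: trancl_into_trancl)
  show ?thesis
  proof (unfold acyclic_def, intro allI notI)
    fix y assume "(y, y) \<in> (A \<union> B)\<^sup>+"
    moreover from this have "y \<noteq> x"
      using assms(3) by (metis Domain.DomainI trancl_domain)
    ultimately show False
      using avoid_sink assms(1) unfolding acyclic_def by blast
  qed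
qed

lemma acyclic_ex_maximal:
  assumes "acyclic R" "finite B" "B \<noteq> {}"
  shows "\<exists>w\<in>B. \<forall>b\<in>B. (w, b) \<notin> R"
proof -
  have "wf ((R \<inter> B \<times> B)\<inverse>)"
    using assms(1,2) by (intro finite_acyclic_wf_converse) (auto intro: acyclic_subset)
  moreover obtain b where "b \<in> B"
    using assms(3) by blast
  ultimately obtain w where "w \<in> B" "\<And>y. (y, w) \<in> (R \<inter> B \<times> B)\<inverse> \<Longrightarrow> y \<notin> B"
    by (rule wfE_min) blast+
  then show ?thesis
    by blast
qed

lemma rtrancl_leaves_set:
  assumes "(x, y) \<in> r\<^sup>*" "x \<in> D" "y \<notin> D"
  shows "\<exists>a b. (a, b) \<in> r \<and> a \<in> D \<and> b \<notin> D"
  using assms by (induction rule: rtrancl_induct) auto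

lemma equiv_Int_Times:
  assumes "refl_on A r" "sym r" "trans r"
  shows "equiv A (r \<inter> A \<times> A)"
proof (rule equivI)
  show "sym (r \<inter> A \<times> A)"
    using assms(2) unfolding sym_def by blast
  show "trans (r \<inter> A \<times> A)"
    using assms(3) unfolding trans_def by blast
  show "refl_on A (r \<inter> A \<times> A)"
    using assms(1) unfolding refl_on_def by blast
qed blast

lemma quotient_Int_Times:
  assumes "r `` A \<subseteq> A"
  shows "A // (r \<inter> A \<times> A) = A // r"
  using assms unfolding quotient_def by blast

lemma card_quotient_mult_le:
  assumes "finite A" "equiv A r" "\<And>X. X \<in> A // r \<Longrightarrow> k \<le> card X"
  shows "card (A // r) * k \<le> card A"
proof -
  have "card (A // r) * k \<le> sum card (A // r)"
    using sum_bounded_below[of "A // r" k card] assms(3) by simp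
  also have "\<dots> = card (\<Union> (A // r))"
  proof (rule card_Union_disjoint[symmetric])
    show "pairwise disjnt (A // r)"
      using quotient_disj[OF assms(2)] unfolding pairwise_def disjnt_def by blast
    show "finite X" if "X \<in> A // r" for X
      using in_quotient_imp_subset[OF assms(2) that] assms(1) finite_subset by blast
  qed
  also have "\<dots> = card A"
    using Union_quotient[OF assms(2)] by simp
  finally show ?thesis .
qed

definition downset :: "('a \<times> 'a) set \<Rightarrow> 'a set \<Rightarrow> bool" where
  "downset R S \<longleftrightarrow> (\<forall>u v. (u, v) \<in> R \<longrightarrow> v \<in> S \<longrightarrow> u \<in> S)"

lemma exists_linear_extension:
  assumes "acyclic R" "finite B"
  shows "\<exists>vs. distinct vs \<and> set vs = B \<and> (\<forall>k. downset (R \<inter> B \<times> B) (set (take k vs)))"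
  using assms(2)
proof (induction rule: finite_remove_induct)
  case empty
  show ?case by (simp add: downset_def)
next
  case (remove A)
  obtain w where w: "w \<in> A" "\<forall>a\<in>A. (w, a) \<notin> R"
    using acyclic_ex_maximal[OF assms(1) remove.hyps(1,2)] by blast
  obtain vs where vs: "distinct vs" "set vs = A - {w}"
    "\<And>k. downset (R \<inter> (A - {w}) \<times> (A - {w})) (set (take k vs))"
    using remove.IH[OF w(1)] by blast
  have "downset (R \<inter> A \<times> A) (set (take k (vs @ [w])))" for k
  proof (cases "k \<le> length vs")
    case True
    show ?thesis
      unfolding downset_def
    proof (intro allI impI)
      fix u v
      assume uv: "(u, v) \<in> R \<inter> A \<times> A" and "v \<in> set (take k (vs @ [w]))"
      then have "v \<in> set (take k vs)"
        using True by simp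
      moreover from this have "v \<in> A - {w}"
        using vs(2) set_take_subset by fast
      ultimately show "u \<in> set (take k (vs @ [w]))"
        using vs(3)[of k] w(2) uv True unfolding downset_def by auto
    qed
  next
    case False
    then show ?thesis
      using vs(2) w(1) unfolding downset_def by auto
  qed
  then show ?case
    using vs(1,2) w(1) by (intro exI[of _ "vs @ [w]"]) auto
qed

lemma mem_click_iff:
  "(a, b) \<in> click F x \<longleftrightarrow> (if a = x \<or> b = x then (b, a) \<in> F else (a, b) \<in> F)"
  unfolding click_def by auto

lemma orientationD:
  assumes "orientation V E F"
  shows "(a, b) \<in> F \<Longrightarrow> {a, b} \<in> E" and "{a, b} \<in> E \<Longrightarrow> (a, b) \<in> F \<longleftrightarrow> (b, a) \<notin> F"
  using assms unfolding orientation_def by auto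

lemma orientation_click:
  assumes "orientation V E F"
  shows "orientation V E (click F x)"
proof -
  note on_edge = orientationD(1)[OF assms] and one_way = orientationD(2)[OF assms]
  have "{a, b} \<in> E" if "(a, b) \<in> click F x" for a b
    using that on_edge[of a b] on_edge[of b a]
    by (auto simp: mem_click_iff insert_commute split: if_splits)
  moreover have "(a, b) \<in> click F x \<longleftrightarrow> (b, a) \<notin> click F x" if "{a, b} \<in> E" for a b
    using one_way[OF that] by (auto simp: mem_click_iff)
  ultimately show ?thesis
    unfolding orientation_def by blast
qed

lemma orientation_subset_Times:
  assumes "simple_graph V E" "orientation V E R"
  shows "R \<subseteq> V \<times> V"
  using assms unfolding simple_graph_def orientation_def by (fastforce simp: doubleton_eq_iff)

lemma finite_acyclic_orientations:
  assumes "simple_graph V E"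
  shows "finite (acyclic_orientations V E)"
proof (rule finite_subset)
  show "acyclic_orientations V E \<subseteq> Pow (V \<times> V)"
    using orientation_subset_Times[OF assms] unfolding acyclic_orientations_def by blast
  show "finite (Pow (V \<times> V))"
    using assms unfolding simple_graph_def by simp
qed

lemma click_source_in_acyclic_orientations:
  assumes "F \<in> acyclic_orientations V E" "is_source F x"
  shows "click F x \<in> acyclic_orientations V E"
proof -
  have "acyclic F" and "orientation V E F"
    using assms(1) unfolding acyclic_orientations_def by auto
  have "click F x = {(a, b) \<in> F. a \<noteq> x \<and> b \<noteq> x} \<union> {(b, x) | b. (x, b) \<in> F}"
    using assms(2) unfolding click_def is_source_def by auto
  \<comment> \<open>the source \<open>x\<close> has become a sink, so no cycle can pass through it\<close>
  also have "acyclic \<dots>"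
    using \<open>acyclic F\<close> acyclic_irrefl[of F]
    by (intro acyclic_Un_into_sink) (auto intro: acyclic_subset simp: irrefl_def)
  finally show ?thesis
    using orientation_click[OF \<open>orientation V E F\<close>]
    unfolding acyclic_orientations_def by simp
qed

lemma kappa_equiv_closed:
  assumes "(R, R') \<in> kappa_equiv V E" "R \<in> acyclic_orientations V E"
  shows "R' \<in> acyclic_orientations V E"
  using assms(1) unfolding kappa_equiv_def
proof (induction rule: rtrancl_induct)
  case base
  show ?case by (rule assms(2))
next
  case (step R' R'')
  from step.hyps(2) consider "(R', R'') \<in> click_step V E" | "(R'', R') \<in> click_step V E"
    by blast
  then show ?case
  proof cases
    case 1
    then obtain x where "is_source R' x" "R'' = click R' x"
      unfolding click_step_def by blast
    then show ?thesis
      using click_source_in_acyclic_orientations[OF step.IH] by simp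
  next
    case 2
    then show ?thesis
      unfolding click_step_def by blast
  qed
qed

text \<open>\<open>kappa_equiv\<close> is reflexive on all relations, so it is an equivalence on the acyclic
  orientations only after restriction.\<close>

lemma equiv_kappa_equiv:
  "equiv (acyclic_orientations V E) (kappa_equiv V E \<inter> acyclic_orientations V E \<times> acyclic_orientations V E)"
  unfolding kappa_equiv_def
  by (rule equiv_Int_Times) (simp_all add: refl_on_def sym_Un_converse sym_rtrancl trans_rtrancl)

definition cut_flip :: "('a \<times> 'a) set \<Rightarrow> 'a set \<Rightarrow> ('a \<times> 'a) set" where
  "cut_flip R S = {(a, b). (a, b) \<in> R \<and> (a \<in> S \<longleftrightarrow> b \<in> S)} \<union>
                  {(b, a) | a b. (a, b) \<in> R \<and> (a \<in> S \<longleftrightarrow> b \<notin> S)}"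

lemma cut_flip_empty [simp]: "cut_flip R {} = R"
  unfolding cut_flip_def by auto

lemma cut_flip_insert_source:
  assumes "downset R S" "v \<notin> S" "\<And>u. (u, v) \<in> R \<Longrightarrow> u \<in> S"
  shows "is_source (cut_flip R S) v" and "click (cut_flip R S) v = cut_flip R (insert v S)"
  using assms unfolding is_source_def click_def cut_flip_def downset_def by blast+

lemma mem_cut_flip_iff:
  assumes "orientation V E R" "(x, y) \<in> R"
  shows "(x, y) \<in> cut_flip R S \<longleftrightarrow> (x \<in> S \<longleftrightarrow> y \<in> S)"
proof -
  have "(y, x) \<notin> R"
    using orientationD[OF assms(1)] assms(2) by blast
  then show ?thesis
    using assms(2) unfolding cut_flip_def by auto
qed

lemma cut_flip_neq_of_psubset:
  assumes "orientation V E R" "connected_graph V E" "S \<subset> T" "T \<subset> V"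
  shows "cut_flip R S \<noteq> cut_flip R T"
proof -
  obtain a c where "a \<in> T - S" "c \<in> V - T"
    using assms(3,4) by blast
  then have "(a, c) \<in> {(a, b). {a, b} \<in> E}\<^sup>*"
    using assms(2,4) unfolding connected_graph_def by blast
  then obtain x y where "{x, y} \<in> E" "x \<in> T - S" "y \<notin> T - S"
    using rtrancl_leaves_set[of a c _ "T - S"] \<open>a \<in> T - S\<close> \<open>c \<in> V - T\<close> by blast
  moreover from this(1) have "(x, y) \<in> R \<or> (y, x) \<in> R"
    using orientationD(2)[OF assms(1)] by blast
  ultimately show ?thesis
    using mem_cut_flip_iff[OF assms(1)] assms(3) by blast
qed

lemma kappa_equiv_cut_flip_downset:
  assumes "R \<in> acyclic_orientations V E" "finite S" "S \<subseteq> V" "downset R S"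
  shows "(R, cut_flip R S) \<in> kappa_equiv V E"
  using assms(2-4)
proof (induction rule: finite_remove_induct)
  case empty
  show ?case by (simp add: kappa_equiv_def)
next
  case (remove A)
  have "acyclic R"
    using assms(1) unfolding acyclic_orientations_def by blast
  then obtain v where v: "v \<in> A" "\<forall>a\<in>A. (v, a) \<notin> R"
    using acyclic_ex_maximal remove.hyps(1,2) by blast
  have "downset R (A - {v})"
    using remove.prems(2) v unfolding downset_def by blast
  then have reach: "(R, cut_flip R (A - {v})) \<in> kappa_equiv V E"
    using remove.IH[OF v(1)] remove.prems(1) by blast
  moreover have "(cut_flip R (A - {v}), cut_flip R A) \<in> click_step V E"
  proof -
    have "(v, v) \<notin> R"
      using \<open>acyclic R\<close> by (auto simp: acyclic_def)
    then have preds: "u \<in> A - {v}" if "(u, v) \<in> R" for u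
      using that remove.prems(2) v(1) unfolding downset_def by blast
    then have "is_source (cut_flip R (A - {v})) v" "click (cut_flip R (A - {v})) v = cut_flip R A"
      using cut_flip_insert_source[OF \<open>downset R (A - {v})\<close>, of v] v(1) insert_Diff by fastforce+
    moreover have "cut_flip R (A - {v}) \<in> acyclic_orientations V E"
      using kappa_equiv_closed[OF reach assms(1)] .
    ultimately show ?thesis
      using v(1) remove.prems(1) unfolding click_step_def by blast
  qed
  ultimately show ?case
    unfolding kappa_equiv_def by (blast intro: rtrancl_into_rtrancl)
qed

lemma card_le_card_kappa_class:
  assumes "simple_graph V E" "connected_graph V E" "R \<in> acyclic_orientations V E"
  shows "card V \<le> card (kappa_equiv V E `` {R})"
proof -
  have "acyclic R" and "orientation V E R"
    using assms(3) unfolding acyclic_orientations_def by auto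
  have "finite V"
    using assms(1) unfolding simple_graph_def by blast
  have "R \<inter> V \<times> V = R"
    using orientation_subset_Times[OF assms(1) \<open>orientation V E R\<close>] by blast
  then obtain vs where vs: "distinct vs" "set vs = V" "\<And>k. downset R (set (take k vs))"
    using exists_linear_extension[OF \<open>acyclic R\<close> \<open>finite V\<close>] by auto
  define prefix where "prefix k = set (take k vs)" for k
  have prefix_subset: "prefix k \<subseteq> V" for k
    using vs(2) set_take_subset unfolding prefix_def by metis
  have card_prefix: "card (prefix k) = k" if "k \<le> card V" for k
    using that vs(1,2) distinct_card[OF vs(1)] unfolding prefix_def
    by (simp add: distinct_card min_absorb1)
  have "inj_on (\<lambda>k. cut_flip R (prefix k)) {..<card V}"
  proof (rule linorder_inj_onI')
    fix i j assume "i \<in> {..<card V}" "j \<in> {..<card V}" "i < j"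
    then have "prefix i \<subset> prefix j" and "prefix j \<subset> V"
      using card_prefix[of i] card_prefix[of j] prefix_subset[of j]
        set_take_subset_set_take[of i j vs] unfolding prefix_def by auto
    then show "cut_flip R (prefix i) \<noteq> cut_flip R (prefix j)"
      using cut_flip_neq_of_psubset[OF \<open>orientation V E R\<close> assms(2)] by blast
  qed
  moreover have "(\<lambda>k. cut_flip R (prefix k)) ` {..<card V} \<subseteq> kappa_equiv V E `` {R}"
    using kappa_equiv_cut_flip_downset[OF assms(3)] prefix_subset vs(3) \<open>finite V\<close>
    unfolding prefix_def by (auto intro: finite_subset)
  moreover have "finite (kappa_equiv V E `` {R})"
    using kappa_equiv_closed[OF _ assms(3)] finite_acyclic_orientations[OF assms(1)]
    by (auto intro: finite_subset)
  ultimately show ?thesis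
    using card_inj_on_le by fastforce
qed

theorem proposition4:
  fixes V :: "'a set" and E :: "'a set set"
  assumes "simple_graph V E" and "connected_graph V E"
  shows "real (kappa V E) \<le> real (alpha V E) / real (card V)"
proof -
  let ?AO = "acyclic_orientations V E" and ?KE = "kappa_equiv V E"
  have quotient_eq: "?AO // (?KE \<inter> ?AO \<times> ?AO) = ?AO // ?KE"
    using kappa_equiv_closed by (intro quotient_Int_Times) blast
  have "card V \<le> card X" if "X \<in> ?AO // ?KE" for X
    using that card_le_card_kappa_class[OF assms] by (auto elim: quotientE)
  then have "kappa V E * card V \<le> alpha V E"
    using card_quotient_mult_le[OF finite_acyclic_orientations[OF assms(1)] equiv_kappa_equiv]
    unfolding kappa_def alpha_def quotient_eq by blast
  moreover have "card V > 0"
    using assms unfolding simple_graph_def connected_graph_def by (simp add: card_gt_0_iff)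
  ultimately show ?thesis
    by (simp add: pos_le_divide_eq flip: of_nat_mult)
qed

end
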